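(* Let $U$ be a countably infinite universe, $\mathcal{C}=(L_1,L_2,\ldots)$ a countably infinite collection of languages over $U$, $\mathcal{A}=\{A_g\}_{g\in[K]}$ a partition of $U$ into finitely many groups, $\alpha\in[0,1]$, let $m^\star_\alpha(L_i)$ be computed by the Representative Procedure in the context, and fix a non-decreasing $f:\mathbb{N}\to\mathbb{N}$ with $\lim_{t\to\infty}f(t)=\infty$. Then the Representative Algorithm in the context (with this $f$) generates non-uniformly with $\alpha$-representation from $\mathcal{C}$ with generation times $t^\star_\alpha(L_i)=\max(g(i),m^\star_\alpha(L_i)+1)$, where $g(i)$ is the smallest $j$ with $f(j)\ge i$: that is, for every $i$ and every enumeration of $L_i$, $\Pr_{x\sim\mathcal{G}_t}[x\in L_i\setminus S_t]=1$ for all $t$ with $|S_t|\ge t^\star_\alpha(L_i)$, and the algorithm is $\alpha$-representative with respect to $S_t$ at every $t\ge1$.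
   Context: A language is an infinite subset of $U$; a collection is a sequence of languages (repetitions allowed, entries distinguished by index). An enumeration of a language $L$ is a sequence $x_1,x_2,\ldots$ with every $x_t\in L$ and every $x\in L$ equal to some $x_t$. $S_t$ is the set of distinct strings among $x_1,\ldots,x_t$. Here a generating algorithm outputs at each time $t$ a probability distribution $\mathcal{G}_t$ on $U$. For a finite nonempty $T\subseteq U$, $\mathrm{emp}_T$ is the uniform distribution on $T$, and $\mathrm{emp}_t=\mathrm{emp}_{S_t}$. For a distribution $D$ on $U$, $D^{\mathcal{A}}(g)=\Pr_{x\sim D}[x\in A_g]$ for $g\in[K]$. The generator is $\alpha$-representative at time $t$ with respect to $S_t$ if $\max_{g\in[K]}|\mathrm{emp}_t^{\mathcal{A}}(g)-\mathcal{G}_t^{\mathcal{A}}(g)|\le\alpha$. Scarce groups: for a collection $\mathcal{D}$ of languages and finite $T\subseteq U$, let $B=\{g\in[K]: A_g\cap((\bigcap_{L\in\mathcal{D}}L)\setminus T)=\emptyset\}$. $T$ suffers group scarcity (w.r.t. $\mathcal{D}$ and $\mathcal{A}$) if some $g\in B$ has $\mathrm{emp}_T^{\mathcal{A}}(g)>\alpha$, or $\sum_{g\in B}\mathrm{emp}_T^{\mathcal{A}}(g)>\alpha(K-|B|)$. Representative Procedure. Set $\mathcal{C}'_0=()$. For $i=1,2,\ldots$: append $L_i$ to the end of $\mathcal{C}'_{i-1}$ to get $\mathcal{C}'_i=(L'_1,\ldots,L'_i)$, set $j=i$. Repeat: (i) let $T$ be a finite (nonempty) set of largest size for which there is a subcollection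 $\mathcal{D}$ of the entries $(L'_1,\ldots,L'_j)$ including $L'_j$, with $T\subseteq L$ for every $L\in\mathcal{D}$ and $T$ suffering group scarcity w.r.t. $\mathcal{D}$ and $\mathcal{A}$; $m_{\mathrm{chk}}=|T|$ ($0$ if no such $T$ exists). (ii) If $j\le1$ or $m_{\mathrm{chk}}>m^\star_\alpha(L'_{j-1})$, stop. (iii) Otherwise swap positions $j-1,j$, set $j\leftarrow j-1$, return to (i). On stopping, set $m^\star_\alpha(L_i)=m_{\mathrm{chk}}$. Representative Algorithm (parameter $f$). At time $t$, run the first $f(t)$ iterations of the Representative Procedure to get $\mathcal{C}'_{f(t)}=(L'_1,\ldots,L'_{f(t)})$. Initialize $I_t=()$; for $j=1,\ldots,f(t)$ in order: if $S_t\subseteq L'_j$ and $S_t$ does not suffer group scarcity w.r.t. $I_t\cup\{L'_j\}$ and $\mathcal{A}$, append $L'_j$ to $I_t$. If $I_t$ is empty, set $\mathcal{G}_t=\mathrm{emp}_t$. Otherwise let $B$ be the scarce groups w.r.t. $I_t$ and $S_t$; for each $g\in[K]\setminus B$ pick some $s_g\in A_g\cap((\bigcap_{L\in I_t}L)\setminus S_t)$, and set $\mathcal{G}_t(s_g)=\mathrm{emp}_t^{\mathcal{A}}(g)+\frac{1}{K-|B|}\sum_{h\in B}\mathrm{emp}_t^{\mathcal{A}}(h)$, with $\mathcal{G}_t(x)=0$ for all other $x$. *)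

theory Defs
  imports "HOL-Probability.Probability"
begin

text \<open>Groups are indexed by 1..K; languages of the collection by 1,2,... (index 0 unused);
  times t start at 1 and S_t = x ` {1..t}.\<close>

definition enumerates :: "'u set \<Rightarrow> (nat \<Rightarrow> 'u) \<Rightarrow> bool" where
  "enumerates L x \<longleftrightarrow> (\<forall>t\<ge>1. x t \<in> L) \<and> (\<forall>y\<in>L. \<exists>t\<ge>1. x t = y)"

definition empT :: "'u set \<Rightarrow> 'u set \<Rightarrow> real" where
  "empT Ag T = real (card (T \<inter> Ag)) / real (card T)"

definition scarce_groups :: "nat \<Rightarrow> (nat \<Rightarrow> 'u set) \<Rightarrow> 'u set set \<Rightarrow> 'u set \<Rightarrow> nat set" where
  "scarce_groups K A D T = {g \<in> {1..K}. A g \<inter> (\<Inter>D - T) = {}}"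

definition suffers_scarcity ::
  "nat \<Rightarrow> (nat \<Rightarrow> 'u set) \<Rightarrow> real \<Rightarrow> 'u set set \<Rightarrow> 'u set \<Rightarrow> bool" where
  "suffers_scarcity K A \<alpha> D T =
     (let B = scarce_groups K A D T in
        (\<exists>g\<in>B. empT (A g) T > \<alpha>) \<or>
        (\<Sum>g\<in>B. empT (A g) T) > \<alpha> * (real K - real (card B)))"

text \<open>m_chk for the current ordering xs (list of language indices) and 1-based position j:
  supremum (in enat, possibly infinite) of sizes of nonempty finite T contained in all members
  of a subcollection of entries 1..j containing entry j and suffering group scarcity; 0 if none.\<close>
definition mchk :: "(nat \<Rightarrow> 'u set) \<Rightarrow> nat \<Rightarrow> (nat \<Rightarrow> 'u set) \<Rightarrow> real \<Rightarrow> nat list \<Rightarrow> nat \<Rightarrow> enat" where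
  "mchk L K A \<alpha> xs j = Sup {enat (card T) | T. finite T \<and> T \<noteq> {} \<and>
      (\<exists>P. P \<subseteq> {..<j} \<and> j - 1 \<in> P \<and> T \<subseteq> \<Inter>((\<lambda>k. L (xs ! k)) ` P) \<and>
           suffers_scarcity K A \<alpha> ((\<lambda>k. L (xs ! k)) ` P) T)}"

text \<open>The swap loop of one iteration; m gives m* of previously inserted languages.
  Returns the new ordering and m_chk on stopping.\<close>
function insert_loop :: "(nat \<Rightarrow> 'u set) \<Rightarrow> nat \<Rightarrow> (nat \<Rightarrow> 'u set) \<Rightarrow> real \<Rightarrow> (nat \<Rightarrow> enat)
    \<Rightarrow> nat list \<Rightarrow> nat \<Rightarrow> nat list \<times> enat" where
  "insert_loop L K A \<alpha> m xs j =
     (let mc = mchk L K A \<alpha> xs j in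
      if j \<le> 1 \<or> mc > m (xs ! (j - 2)) then (xs, mc)
      else insert_loop L K A \<alpha> m (xs[j - 2 := xs ! (j - 1), j - 1 := xs ! (j - 2)]) (j - 1))"
  by pat_completeness auto
termination by (relation "Wellfounded.measure (\<lambda>(_, _, _, _, _, _, j). j)") auto

text \<open>First n iterations of the Representative Procedure: ordering C'_n (as indices) and m*.\<close>
primrec rep_proc :: "(nat \<Rightarrow> 'u set) \<Rightarrow> nat \<Rightarrow> (nat \<Rightarrow> 'u set) \<Rightarrow> real \<Rightarrow> nat
    \<Rightarrow> nat list \<times> (nat \<Rightarrow> enat)" where
  "rep_proc L K A \<alpha> 0 = ([], (\<lambda>_. 0))"
| "rep_proc L K A \<alpha> (Suc n) =
     (let (xs, m) = rep_proc L K A \<alpha> n;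
          r = insert_loop L K A \<alpha> m (xs @ [Suc n]) (Suc n)
      in (fst r, m(Suc n := snd r)))"

definition mstar :: "(nat \<Rightarrow> 'u set) \<Rightarrow> nat \<Rightarrow> (nat \<Rightarrow> 'u set) \<Rightarrow> real \<Rightarrow> nat \<Rightarrow> enat" where
  "mstar L K A \<alpha> i = snd (rep_proc L K A \<alpha> i) i"

definition rep_I :: "(nat \<Rightarrow> 'u set) \<Rightarrow> nat \<Rightarrow> (nat \<Rightarrow> 'u set) \<Rightarrow> real \<Rightarrow> nat list \<Rightarrow> 'u set
    \<Rightarrow> nat list" where
  "rep_I L K A \<alpha> xs S = foldl (\<lambda>I k. if S \<subseteq> L k \<and> \<not> suffers_scarcity K A \<alpha> (L ` set (I @ [k])) S
                                     then I @ [k] else I) [] xs"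

text \<open>G is a possible output of the Representative Algorithm when it runs n = f(t) iterations
  and the current sample set is S (any admissible choice of the s_g).\<close>
definition rep_alg_output :: "(nat \<Rightarrow> 'u set) \<Rightarrow> nat \<Rightarrow> (nat \<Rightarrow> 'u set) \<Rightarrow> real \<Rightarrow> nat \<Rightarrow> 'u set
    \<Rightarrow> 'u pmf \<Rightarrow> bool" where
  "rep_alg_output L K A \<alpha> n S G =
     (let I = rep_I L K A \<alpha> (fst (rep_proc L K A \<alpha> n)) S in
      if I = [] then G = pmf_of_set S
      else (let D = L ` set I; B = scarce_groups K A D S in
        \<exists>s. (\<forall>g\<in>{1..K} - B. s g \<in> A g \<inter> (\<Inter>D - S)) \<and>
            (\<forall>y. pmf G y = (\<Sum>g\<in>{1..K} - B. if s g = y then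
                 empT (A g) S + (\<Sum>h\<in>B. empT (A h) S) / (real K - real (card B)) else 0))))"

end

(*
  Call T a scarcity witness for a subcollection M if T is finite, nonempty, contained in every
  language of M and suffers group scarcity w.r.t. M. The Representative Procedure maintains the
  invariant that for every position p of the current ordering, each scarcity witness for a
  subcollection of the first p + 1 entries that contains entry p has size at most m* of that
  entry. A newly inserted language stops at a position where m_chk bounds exactly these
  witnesses, and it only moves in front of L'_(j-1) when m_chk <= m*(L'_(j-1)), so the language it
  passes keeps its bound. At time t with f(t) >= i and |S_t| > m*(L_i), the languages already in
  I_t when L_i is examined all precede L_i, so by the invariant I_t together with L_i is not
  scarce for S_t and L_i joins I_t; the output is then supported on the intersection of I_t
  minus S_t, a subset of L_i minus S_t. Representativeness holds because I_t is never scarce: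
  scarce groups receive no mass but had empirical mass at most alpha, and every other group
  gains the redistributed share, which is at most alpha.
*)
theory Submission
  imports Defs
begin

declare insert_loop.simps[simp del]

definition scarce_witness ::
  "(nat \<Rightarrow> 'u set) \<Rightarrow> nat \<Rightarrow> (nat \<Rightarrow> 'u set) \<Rightarrow> real \<Rightarrow> nat set \<Rightarrow> 'u set \<Rightarrow> bool" where
  "scarce_witness L K A \<alpha> M T \<longleftrightarrow>
     finite T \<and> T \<noteq> {} \<and> T \<subseteq> \<Inter>(L ` M) \<and> suffers_scarcity K A \<alpha> (L ` M) T"

definition scarcity_bounded_at :: "(nat \<Rightarrow> 'u set) \<Rightarrow> nat \<Rightarrow> (nat \<Rightarrow> 'u set) \<Rightarrow> real
    \<Rightarrow> nat list \<Rightarrow> (nat \<Rightarrow> enat) \<Rightarrow> nat \<Rightarrow> bool" where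
  "scarcity_bounded_at L K A \<alpha> xs m p \<longleftrightarrow>
     (\<forall>M T. M \<subseteq> set (take (Suc p) xs) \<and> xs ! p \<in> M \<and> scarce_witness L K A \<alpha> M T
        \<longrightarrow> enat (card T) \<le> m (xs ! p))"

lemma scarcity_bounded_atD:
  assumes "scarcity_bounded_at L K A \<alpha> xs m p" "M \<subseteq> set (take (Suc p) xs)" "xs ! p \<in> M"
    "scarce_witness L K A \<alpha> M T"
  shows "enat (card T) \<le> m (xs ! p)"
  using assms unfolding scarcity_bounded_at_def by blast

lemma scarcity_bounded_at_cong:
  assumes "set (take (Suc p) xs) = set (take (Suc p) ys)" "xs ! p = ys ! p"
  shows "scarcity_bounded_at L K A \<alpha> xs m p = scarcity_bounded_at L K A \<alpha> ys m p"
  using assms unfolding scarcity_bounded_at_def by simp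

lemma card_le_mchk:
  assumes "1 \<le> j" "M \<subseteq> set (take j xs)" "xs ! (j - 1) \<in> M" "scarce_witness L K A \<alpha> M T"
  shows "enat (card T) \<le> mchk L K A \<alpha> xs j"
proof -
  define P where "P = {k. k < j \<and> xs ! k \<in> M}"
  have "M \<subseteq> (!) xs ` P"
    using assms(2) unfolding P_def by (force simp: in_set_conv_nth)
  then have "(\<lambda>k. L (xs ! k)) ` P = L ` M"
    unfolding P_def by auto
  moreover have "j - 1 \<in> P"
    using assms(1,3) unfolding P_def by simp
  moreover have "P \<subseteq> {..<j}"
    unfolding P_def by auto
  ultimately show ?thesis
    using assms(4) unfolding mchk_def scarce_witness_def
    by (intro Sup_upper) (smt (verit) mem_Collect_eq)
qed

lemma scarcity_bounded_at_mchk: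
  assumes "distinct xs" "1 \<le> j" "j \<le> length xs" "xs ! (j - 1) = new"
    and bounded: "\<forall>p<length xs. p \<noteq> j - 1 \<longrightarrow> scarcity_bounded_at L K A \<alpha> xs m p"
    and "p < length xs"
  shows "scarcity_bounded_at L K A \<alpha> xs (m(new := mchk L K A \<alpha> xs j)) p"
proof (cases "p = j - 1")
  case True
  then show ?thesis
    using assms card_le_mchk[of j _ xs L K A \<alpha>] unfolding scarcity_bounded_at_def by auto
next
  case False
  then have "xs ! p \<noteq> new"
    using assms by (auto simp: nth_eq_iff_index_eq)
  then show ?thesis
    using bounded assms(6) False unfolding scarcity_bounded_at_def by auto
qed

lemma scarcity_bounded_at_swap:
  fixes xs :: "nat list" and j :: nat
  defines "ys \<equiv> xs[j - 2 := xs ! (j - 1), j - 1 := xs ! (j - 2)]"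
  assumes "distinct xs" "2 \<le> j" "j \<le> length xs" "xs ! (j - 1) = new"
    and mchk_le: "mchk L K A \<alpha> xs j \<le> m (xs ! (j - 2))"
    and bounded: "\<forall>p<length xs. p \<noteq> j - 1 \<longrightarrow> scarcity_bounded_at L K A \<alpha> xs m p"
    and "p < length xs" "p \<noteq> j - 2"
  shows "scarcity_bounded_at L K A \<alpha> ys m p"
proof -
  have swap_eq: "take n ys = (take n xs)[j - 2 := take n xs ! (j - 1), j - 1 := take n xs ! (j - 2)]"
    if "j \<le> n" for n
    using that assms(3) by (simp add: ys_def take_update_swap)
  have set_swap_eq: "set (take n ys) = set (take n xs)" if "j \<le> n" for n
    unfolding swap_eq[OF that] using that assms(3,4) by (intro set_swap) auto
  consider "p < j - 2" | "j - 1 < p" | "p = j - 1"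
    using assms(9) by linarith
  then show ?thesis
  proof cases
    case 1
    then have "take (Suc p) ys = take (Suc p) xs" "ys ! p = xs ! p"
      by (simp_all add: ys_def)
    moreover have "scarcity_bounded_at L K A \<alpha> xs m p"
      using bounded 1 assms(8) by simp
    ultimately show ?thesis
      using scarcity_bounded_at_cong[of p ys xs L K A \<alpha> m] by simp
  next
    case 2
    then have "set (take (Suc p) ys) = set (take (Suc p) xs)"
      using set_swap_eq by simp
    moreover have "ys ! p = xs ! p"
      using 2 by (simp add: ys_def)
    moreover have "scarcity_bounded_at L K A \<alpha> xs m p"
      using bounded 2 assms(8) by simp
    ultimately show ?thesis
      using scarcity_bounded_at_cong[of p ys xs L K A \<alpha> m] by simp
  next
    case 3
    have "Suc (j - 2) = j - 1" "Suc (j - 1) = j"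
      using assms(3) by simp_all
    then have take_j: "take j xs = take (Suc (j - 2)) xs @ [new]"
      using assms(4,5) take_Suc_conv_app_nth[of "j - 1" xs] by simp
    have set_ys: "set (take (Suc p) ys) = set (take j xs)"
      using 3 assms(3) set_swap_eq[of j] by simp
    have ys_p: "ys ! p = xs ! (j - 2)"
      using 3 assms(3,4) by (simp add: ys_def)
    show ?thesis
      unfolding scarcity_bounded_at_def
    proof (intro allI impI, elim conjE)
      fix M T
      assume M: "M \<subseteq> set (take (Suc p) ys)" "ys ! p \<in> M" and T: "scarce_witness L K A \<alpha> M T"
      show "enat (card T) \<le> m (ys ! p)"
      proof (cases "new \<in> M")
        case True
        then have "enat (card T) \<le> mchk L K A \<alpha> xs j"
          using card_le_mchk[OF _ _ _ T] M(1) set_ys assms(3,5) by simp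
        then show ?thesis
          using mchk_le ys_p by simp
      next
        case False
        then have "M \<subseteq> set (take (Suc (j - 2)) xs)"
          using M(1) set_ys take_j by auto
        then show ?thesis
          using scarcity_bounded_atD[OF _ _ _ T] bounded M(2) ys_p assms(3,4) by simp
      qed
    qed
  qed
qed

lemma insert_loop_invariant:
  assumes "insert_loop L K A \<alpha> m xs j = (xs', mc)" "distinct xs" "1 \<le> j" "j \<le> length xs"
    "xs ! (j - 1) = new" "\<forall>p<length xs. p \<noteq> j - 1 \<longrightarrow> scarcity_bounded_at L K A \<alpha> xs m p"
  shows "mset xs' = mset xs \<and> (\<forall>p<length xs'. scarcity_bounded_at L K A \<alpha> xs' (m(new := mc)) p)"
  using assms
proof (induction L K A \<alpha> m xs j rule: insert_loop.induct)
  case (1 L K A \<alpha> m xs j)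
  show ?case
  proof (cases "j \<le> 1 \<or> mchk L K A \<alpha> xs j > m (xs ! (j - 2))")
    case True
    then have "insert_loop L K A \<alpha> m xs j = (xs, mchk L K A \<alpha> xs j)"
      by (subst insert_loop.simps) (simp add: Let_def)
    then have "xs' = xs" "mc = mchk L K A \<alpha> xs j"
      using "1.prems"(1) by simp_all
    then show ?thesis
      using scarcity_bounded_at_mchk[of xs j new L K A \<alpha> m] "1.prems" by blast
  next
    case False
    define ys where "ys = xs[j - 2 := xs ! (j - 1), j - 1 := xs ! (j - 2)]"
    have loop: "insert_loop L K A \<alpha> m ys (j - 1) = (xs', mc)"
      using "1.prems"(1) False insert_loop.simps[of L K A \<alpha> m xs j] by (simp add: Let_def ys_def)
    have mset_ys: "mset ys = mset xs"
      unfolding ys_def using False "1.prems"(4) by (intro mset_swap) auto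
    have "1 \<le> j - 1" "j - 1 \<le> length ys"
      using False "1.prems"(4) by (auto simp: ys_def)
    moreover have "distinct ys"
      using mset_ys "1.prems"(2) mset_eq_imp_distinct_iff by blast
    moreover have "ys ! (j - 1 - 1) = new"
      using False "1.prems"(4,5) by (auto simp: ys_def nth_list_update)
    moreover have "\<forall>p<length ys. p \<noteq> j - 1 - 1 \<longrightarrow> scarcity_bounded_at L K A \<alpha> ys m p"
      using scarcity_bounded_at_swap[of xs j new L K A \<alpha> m] False "1.prems"(2-6)
      by (auto simp: ys_def not_less)
    ultimately show ?thesis
      using "1.IH"[OF refl False, folded ys_def, OF loop] mset_ys by simp
  qed
qed

lemma rep_proc_invariant:
  "distinct (fst (rep_proc L K A \<alpha> n)) \<and> set (fst (rep_proc L K A \<alpha> n)) = {1..n} \<and>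
   (\<forall>p<n. scarcity_bounded_at L K A \<alpha> (fst (rep_proc L K A \<alpha> n)) (snd (rep_proc L K A \<alpha> n)) p)"
proof (induction n)
  case 0
  show ?case by simp
next
  case (Suc n)
  obtain xs m where rep: "rep_proc L K A \<alpha> n = (xs, m)"
    by fastforce
  obtain xs' mc where loop: "insert_loop L K A \<alpha> m (xs @ [Suc n]) (Suc n) = (xs', mc)"
    by fastforce
  have xs: "distinct xs" "set xs = {1..n}" "\<forall>p<n. scarcity_bounded_at L K A \<alpha> xs m p"
    using Suc.IH rep by simp_all
  then have len: "length xs = n"
    using distinct_card by fastforce
  have "scarcity_bounded_at L K A \<alpha> (xs @ [Suc n]) m p" if "p < n" for p
    using xs(3) that len scarcity_bounded_at_cong[of p "xs @ [Suc n]" xs L K A \<alpha> m]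
    by (simp add: nth_append)
  then have perm: "mset xs' = mset (xs @ [Suc n])"
    and bounded: "\<forall>p<length xs'. scarcity_bounded_at L K A \<alpha> xs' (m(Suc n := mc)) p"
    using insert_loop_invariant[OF loop] xs len by (simp_all add: nth_append)
  have "distinct xs'"
    using mset_eq_imp_distinct_iff[OF perm] xs len by simp
  moreover have "set xs' = {1..Suc n}"
    using mset_eq_setD[OF perm] xs by auto
  moreover have "length xs' = Suc n"
    using mset_eq_length[OF perm] len by simp
  moreover have "rep_proc L K A \<alpha> (Suc n) = (xs', m(Suc n := mc))"
    using rep loop by simp
  ultimately show ?case
    using bounded by (metis fst_conv snd_conv)
qed

lemma snd_rep_proc_eq_mstar:
  assumes "i \<le> n"
  shows "snd (rep_proc L K A \<alpha> n) i = mstar L K A \<alpha> i"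
  using assms
proof (induction n)
  case 0
  then show ?case by (simp add: mstar_def)
next
  case (Suc n)
  then show ?case
    by (cases "i = Suc n") (auto simp: mstar_def Let_def split: prod.split)
qed

definition rep_I_step ::
  "(nat \<Rightarrow> 'u set) \<Rightarrow> nat \<Rightarrow> (nat \<Rightarrow> 'u set) \<Rightarrow> real \<Rightarrow> 'u set \<Rightarrow> nat list \<Rightarrow> nat \<Rightarrow> nat list" where
  "rep_I_step L K A \<alpha> S I k =
     (if S \<subseteq> L k \<and> \<not> suffers_scarcity K A \<alpha> (L ` set (I @ [k])) S then I @ [k] else I)"

lemma rep_I_eq_foldl: "rep_I L K A \<alpha> xs S = foldl (rep_I_step L K A \<alpha> S) [] xs"
  unfolding rep_I_def rep_I_step_def ..

lemma foldl_invariant: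
  "\<lbrakk>P s; \<And>s x. x \<in> set xs \<Longrightarrow> P s \<Longrightarrow> P (f s x)\<rbrakk> \<Longrightarrow> P (foldl f s xs)"
  by (induction xs arbitrary: s) simp_all

lemma foldl_rep_I_step_extends:
  "\<exists>J. foldl (rep_I_step L K A \<alpha> S) I xs = I @ J \<and> set J \<subseteq> set xs"
  by (rule foldl_invariant[where P = "\<lambda>I'. \<exists>J. I' = I @ J \<and> set J \<subseteq> set xs"])
    (auto simp: rep_I_step_def)

lemma foldl_rep_I_step_contains:
  assumes "\<forall>k\<in>set I. S \<subseteq> L k"
  shows "\<forall>k\<in>set (foldl (rep_I_step L K A \<alpha> S) I xs). S \<subseteq> L k"
  by (rule foldl_invariant[where P = "\<lambda>I. \<forall>k\<in>set I. S \<subseteq> L k"]) (auto simp: assms rep_I_step_def)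

lemma rep_I_not_scarce:
  assumes "rep_I L K A \<alpha> xs S \<noteq> []"
  shows "\<not> suffers_scarcity K A \<alpha> (L ` set (rep_I L K A \<alpha> xs S)) S"
proof -
  have "foldl (rep_I_step L K A \<alpha> S) [] xs = [] \<or>
      \<not> suffers_scarcity K A \<alpha> (L ` set (foldl (rep_I_step L K A \<alpha> S) [] xs)) S"
    by (rule foldl_invariant) (auto simp: rep_I_step_def)
  then show ?thesis
    using assms unfolding rep_I_eq_foldl by simp
qed

lemma mem_rep_I:
  assumes bounded: "scarcity_bounded_at L K A \<alpha> xs m p" and "p < length xs" "xs ! p = i"
    and S: "finite S" "S \<noteq> {}" "S \<subseteq> L i" and small: "m i < enat (card S)"
  shows "i \<in> set (rep_I L K A \<alpha> xs S)"
proof -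
  define I where "I = foldl (rep_I_step L K A \<alpha> S) [] (take p xs)"
  have I_sub: "set I \<subseteq> set (take p xs)"
    using foldl_rep_I_step_extends[of L K A \<alpha> S "[]" "take p xs"] unfolding I_def by auto
  have contains: "\<forall>k\<in>set (I @ [i]). S \<subseteq> L k"
    using foldl_rep_I_step_contains[of "[]" S L K A \<alpha> "take p xs"] S(3) unfolding I_def by auto
  have "\<not> scarce_witness L K A \<alpha> (set (I @ [i])) S \<or> enat (card S) \<le> m i"
    using scarcity_bounded_atD[OF bounded, of "set (I @ [i])" S] I_sub assms(2,3)
    by (auto simp: take_Suc_conv_app_nth)
  then have "rep_I_step L K A \<alpha> S I i = I @ [i]"
    using S small contains unfolding rep_I_step_def scarce_witness_def
    by (auto simp: not_le[symmetric])
  moreover have "xs = take p xs @ i # drop (Suc p) xs"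
    using assms(2,3) id_take_nth_drop by blast
  ultimately have "rep_I L K A \<alpha> xs S = foldl (rep_I_step L K A \<alpha> S) (I @ [i]) (drop (Suc p) xs)"
    unfolding rep_I_eq_foldl I_def by (metis foldl_Cons foldl_append)
  then show ?thesis
    using foldl_rep_I_step_extends[of L K A \<alpha> S "I @ [i]" "drop (Suc p) xs"] by auto
qed

lemma measure_pmf_eq_sum_points:
  fixes G :: "'a pmf"
  assumes "finite I" and pmf_G: "\<And>y. pmf G y = (\<Sum>i\<in>I. if s i = y then w i else 0)"
  shows "measure_pmf.prob G X = (\<Sum>i\<in>I. if s i \<in> X then w i else 0)"
proof -
  have "pmf G y = 0" if "y \<notin> s ` I" for y
    using that pmf_G by (auto intro!: sum.neutral)
  then have "set_pmf G \<subseteq> s ` I"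
    by (auto simp: set_pmf_eq)
  then have "X \<inter> set_pmf G = (X \<inter> s ` I) \<inter> set_pmf G"
    by blast
  then have "measure_pmf.prob G X = measure_pmf.prob G ((X \<inter> s ` I) \<inter> set_pmf G)"
    by (metis measure_Int_set_pmf)
  also have "\<dots> = (\<Sum>y\<in>X \<inter> s ` I. pmf G y)"
    using assms(1) unfolding measure_Int_set_pmf by (intro measure_measure_pmf_finite) blast
  also have "\<dots> = (\<Sum>i\<in>I. \<Sum>y\<in>X \<inter> s ` I. if s i = y then w i else 0)"
    unfolding pmf_G by (rule sum.swap)
  also have "\<dots> = (\<Sum>i\<in>I. if s i \<in> X then w i else 0)"
    using assms(1) by (intro sum.cong) auto
  finally show ?thesis .
qed

lemma rep_alg_output_nonempty:
  assumes "rep_alg_output L K A \<alpha> n S G" "rep_I L K A \<alpha> (fst (rep_proc L K A \<alpha> n)) S = I" "I \<noteq> []"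
  defines "B \<equiv> scarce_groups K A (L ` set I) S"
  obtains s where "\<forall>g\<in>{1..K} - B. s g \<in> A g \<inter> (\<Inter>(L ` set I) - S)"
    "\<And>y. pmf G y = (\<Sum>g\<in>{1..K} - B. if s g = y
       then empT (A g) S + (\<Sum>h\<in>B. empT (A h) S) / (real K - real (card B)) else 0)"
  using assms unfolding rep_alg_output_def Let_def by auto

lemma rep_alg_output_prob_Diff:
  assumes out: "rep_alg_output L K A \<alpha> n S G"
    and i: "i \<in> set (rep_I L K A \<alpha> (fst (rep_proc L K A \<alpha> n)) S)"
  shows "measure_pmf.prob G (L i - S) = 1"
proof -
  define I where "I = rep_I L K A \<alpha> (fst (rep_proc L K A \<alpha> n)) S"
  define B where "B = scarce_groups K A (L ` set I) S"
  define c where "c = (\<Sum>h\<in>B. empT (A h) S) / (real K - real (card B))"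
  have "I \<noteq> []"
    using i I_def by auto
  then obtain s where s: "\<forall>g\<in>{1..K} - B. s g \<in> A g \<inter> (\<Inter>(L ` set I) - S)"
    and pmf_G: "\<And>y. pmf G y = (\<Sum>g\<in>{1..K} - B. if s g = y then empT (A g) S + c else 0)"
    using rep_alg_output_nonempty[OF out I_def[symmetric]] unfolding B_def c_def by blast
  have "\<Inter>(L ` set I) \<subseteq> L i"
    using i unfolding I_def by auto
  then have "\<forall>g\<in>{1..K} - B. s g \<in> L i - S"
    using s by blast
  then have "measure_pmf.prob G (L i - S) =
      (\<Sum>g\<in>{1..K} - B. if s g \<in> UNIV then empT (A g) S + c else 0)"
    by (subst measure_pmf_eq_sum_points[OF _ pmf_G]) (auto intro!: sum.cong)
  also have "\<dots> = measure_pmf.prob G UNIV"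
    by (rule measure_pmf_eq_sum_points[OF _ pmf_G, symmetric]) simp
  finally show ?thesis
    by simp
qed

lemma rep_alg_output_representative:
  assumes out: "rep_alg_output L K A \<alpha> n S G" and S: "finite S" "S \<noteq> {}"
    and disjoint: "\<forall>g\<in>{1..K}. \<forall>h\<in>{1..K}. g \<noteq> h \<longrightarrow> A g \<inter> A h = {}"
    and "0 \<le> \<alpha>" and g: "g \<in> {1..K}"
  shows "\<bar>empT (A g) S - measure_pmf.prob G (A g)\<bar> \<le> \<alpha>"
proof (cases "rep_I L K A \<alpha> (fst (rep_proc L K A \<alpha> n)) S = []")
  case True
  then have "G = pmf_of_set S"
    using out unfolding rep_alg_output_def by simp
  then show ?thesis
    using S \<open>0 \<le> \<alpha>\<close> by (simp add: measure_pmf_of_set empT_def Int_commute)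
next
  case False
  define I where "I = rep_I L K A \<alpha> (fst (rep_proc L K A \<alpha> n)) S"
  define B where "B = scarce_groups K A (L ` set I) S"
  define c where "c = (\<Sum>h\<in>B. empT (A h) S) / (real K - real (card B))"
  obtain s where s: "\<forall>h\<in>{1..K} - B. s h \<in> A h \<inter> (\<Inter>(L ` set I) - S)"
    and pmf_G: "\<And>y. pmf G y = (\<Sum>h\<in>{1..K} - B. if s h = y then empT (A h) S + c else 0)"
    using rep_alg_output_nonempty[OF out I_def[symmetric]] False
    unfolding I_def B_def c_def by blast
  have "\<not> suffers_scarcity K A \<alpha> (L ` set I) S"
    using rep_I_not_scarce False unfolding I_def by blast
  then have scarce_small: "\<forall>h\<in>B. empT (A h) S \<le> \<alpha>"
    and scarce_sum: "(\<Sum>h\<in>B. empT (A h) S) \<le> \<alpha> * (real K - real (card B))"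
    unfolding suffers_scarcity_def Let_def B_def by (auto simp: not_less)
  have "B \<subseteq> {1..K}"
    unfolding B_def scarce_groups_def by auto
  then have "card B \<le> K"
    using card_mono[of "{1..K}" B] by simp
  then have c_bounds: "0 \<le> c" "c \<le> \<alpha>"
    using scarce_sum \<open>0 \<le> \<alpha>\<close> unfolding c_def
    by (auto simp: empT_def sum_nonneg divide_le_eq mult.commute)
  have "measure_pmf.prob G (A g) = (\<Sum>h\<in>{1..K} - B. if s h \<in> A g then empT (A h) S + c else 0)"
    by (rule measure_pmf_eq_sum_points[OF _ pmf_G]) simp
  also have "\<dots> = (\<Sum>h\<in>{1..K} - B. if h = g then empT (A h) S + c else 0)"
  proof (rule sum.cong)
    fix h assume "h \<in> {1..K} - B"
    then have "s h \<in> A g \<longleftrightarrow> h = g"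
      using s disjoint g by blast
    then show "(if s h \<in> A g then empT (A h) S + c else 0) = (if h = g then empT (A h) S + c else 0)"
      by simp
  qed simp
  also have "\<dots> = (if g \<in> B then 0 else empT (A g) S + c)"
    using g by simp
  finally show ?thesis
    using c_bounds scarce_small by (auto simp: empT_def)
qed

lemma mem_rep_I_rep_proc:
  assumes "1 \<le> i" "i \<le> n" "finite S" "S \<noteq> {}" "S \<subseteq> L i"
    and "mstar L K A \<alpha> i < enat (card S)"
  shows "i \<in> set (rep_I L K A \<alpha> (fst (rep_proc L K A \<alpha> n)) S)"
proof -
  define xs where "xs = fst (rep_proc L K A \<alpha> n)"
  have "distinct xs" "set xs = {1..n}"
    and bounded: "\<forall>p<n. scarcity_bounded_at L K A \<alpha> xs (snd (rep_proc L K A \<alpha> n)) p"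
    using rep_proc_invariant unfolding xs_def by blast+
  then have "length xs = n"
    using distinct_card by fastforce
  moreover obtain p where "p < length xs" "xs ! p = i"
    using \<open>set xs = {1..n}\<close> assms(1,2) by (metis atLeastAtMost_iff in_set_conv_nth)
  moreover have "snd (rep_proc L K A \<alpha> n) i = mstar L K A \<alpha> i"
    using assms(2) by (rule snd_rep_proc_eq_mstar)
  ultimately show ?thesis
    using mem_rep_I[of L K A \<alpha> xs "snd (rep_proc L K A \<alpha> n)" p i S] bounded assms(3-6)
    unfolding xs_def by simp
qed

lemma le_f_of_Least_le:
  fixes f :: "nat \<Rightarrow> nat"
  assumes "mono f" "filterlim f at_top at_top" "(LEAST j. j \<ge> 1 \<and> f j \<ge> i) \<le> t"
  shows "i \<le> f t"
proof -
  obtain N where "\<forall>j\<ge>N. i \<le> f j"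
    using assms(2) by (auto simp: filterlim_at_top eventually_sequentially)
  then have "\<exists>j. j \<ge> 1 \<and> f j \<ge> i"
    by (metis le_add2 le_add1)
  then have "i \<le> f (LEAST j. j \<ge> 1 \<and> f j \<ge> i)"
    by (rule LeastI2_ex) simp
  also have "\<dots> \<le> f t"
    using assms(1,3) by (rule monoD)
  finally show ?thesis .
qed

theorem mainTheorem8:
  fixes L :: "nat \<Rightarrow> 'u set" and K :: nat and A :: "nat \<Rightarrow> 'u set" and \<alpha> :: real
    and f :: "nat \<Rightarrow> nat"
  assumes "countable (UNIV :: 'u set)" and "infinite (UNIV :: 'u set)"
    and "\<forall>i\<ge>1. infinite (L i)"
    and "\<forall>g\<in>{1..K}. A g \<noteq> {}"
    and "\<forall>g\<in>{1..K}. \<forall>h\<in>{1..K}. g \<noteq> h \<longrightarrow> A g \<inter> A h = {}"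
    and "(\<Union>g\<in>{1..K}. A g) = UNIV"
    and "0 \<le> \<alpha>" and "\<alpha> \<le> 1"
    and "mono f" and "filterlim f at_top at_top"
  shows "\<forall>i\<ge>1. \<forall>(x :: nat \<Rightarrow> 'u) (G :: nat \<Rightarrow> 'u pmf).
           enumerates (L i) x \<and> (\<forall>t\<ge>1. rep_alg_output L K A \<alpha> (f t) (x ` {1..t}) (G t)) \<longrightarrow>
           (\<forall>t\<ge>1. max (enat (LEAST j. j \<ge> 1 \<and> f j \<ge> i)) (mstar L K A \<alpha> i + 1)
                       \<le> enat (card (x ` {1..t})) \<longrightarrow>
                    measure_pmf.prob (G t) (L i - x ` {1..t}) = 1) \<and>
           (\<forall>t\<ge>1. \<forall>g\<in>{1..K}.
              \<bar>empT (A g) (x ` {1..t}) - measure_pmf.prob (G t) (A g)\<bar> \<le> \<alpha>)"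
proof (intro allI impI conjI)
  fix i t :: nat and x :: "nat \<Rightarrow> 'u" and G :: "nat \<Rightarrow> 'u pmf"
  assume "1 \<le> i" "1 \<le> t"
    and run: "enumerates (L i) x \<and> (\<forall>t\<ge>1. rep_alg_output L K A \<alpha> (f t) (x ` {1..t}) (G t))"
    and large: "max (enat (LEAST j. j \<ge> 1 \<and> f j \<ge> i)) (mstar L K A \<alpha> i + 1)
      \<le> enat (card (x ` {1..t}))"
  have "(LEAST j. j \<ge> 1 \<and> f j \<ge> i) \<le> t"
    using large card_image_le[of "{1..t}" x] by simp
  then have "i \<le> f t"
    using le_f_of_Least_le assms(9,10) by blast
  moreover have "mstar L K A \<alpha> i < enat (card (x ` {1..t}))"
    using large by (cases "mstar L K A \<alpha> i") (auto simp: one_enat_def)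
  moreover have "x ` {1..t} \<subseteq> L i"
    using run unfolding enumerates_def by auto
  ultimately have "i \<in> set (rep_I L K A \<alpha> (fst (rep_proc L K A \<alpha> (f t))) (x ` {1..t}))"
    using \<open>1 \<le> i\<close> \<open>1 \<le> t\<close> by (intro mem_rep_I_rep_proc) auto
  moreover have "rep_alg_output L K A \<alpha> (f t) (x ` {1..t}) (G t)"
    using run \<open>1 \<le> t\<close> by simp
  ultimately show "measure_pmf.prob (G t) (L i - x ` {1..t}) = 1"
    by (intro rep_alg_output_prob_Diff)
next
  fix i t :: nat and x :: "nat \<Rightarrow> 'u" and G :: "nat \<Rightarrow> 'u pmf"
  assume "1 \<le> t"
    and run: "enumerates (L i) x \<and> (\<forall>t\<ge>1. rep_alg_output L K A \<alpha> (f t) (x ` {1..t}) (G t))"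
  then have "rep_alg_output L K A \<alpha> (f t) (x ` {1..t}) (G t)" "x ` {1..t} \<noteq> {}"
    by auto
  then show "\<forall>g\<in>{1..K}. \<bar>empT (A g) (x ` {1..t}) - measure_pmf.prob (G t) (A g)\<bar> \<le> \<alpha>"
    using rep_alg_output_representative[OF _ _ _ assms(5,7)] by blast
qed

end
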